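(* Let $G$ and $H$ be finite simple connected graphs of order at least $3$, and let $D$ be a minimal dominating set of $G$. The set $D \times V(H)$ is a minimal dominating set of the direct product $G \times H$ if and only if $D$ is an independent set in $G$.
   Context: A set $D$ of vertices is dominating if every vertex is in $D$ or adjacent to a vertex of $D$; it is minimal if no proper subset is dominating. The direct product $G\times H$ has vertex set $V(G)\times V(H)$, with $(g_1,h_1)$ adjacent to $(g_2,h_2)$ iff $g_1g_2\in E(G)$ and $h_1h_2\in E(H)$. *)

theory Defs
  imports Main
begin

definition simple_graph :: "'a set \<Rightarrow> ('a \<Rightarrow> 'a \<Rightarrow> bool) \<Rightarrow> bool" where
  "simple_graph V E \<longleftrightarrow> finite V \<and> (\<forall>x y. E x y \<longrightarrow> x \<in> V \<and> y \<in> V)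
     \<and> (\<forall>x y. E x y \<longrightarrow> E y x) \<and> (\<forall>x. \<not> E x x)"

definition connected_graph :: "'a set \<Rightarrow> ('a \<Rightarrow> 'a \<Rightarrow> bool) \<Rightarrow> bool" where
  "connected_graph V E \<longleftrightarrow> (\<forall>x\<in>V. \<forall>y\<in>V. E\<^sup>*\<^sup>* x y)"

definition dominating :: "'a set \<Rightarrow> ('a \<Rightarrow> 'a \<Rightarrow> bool) \<Rightarrow> 'a set \<Rightarrow> bool" where
  "dominating V E D \<longleftrightarrow> D \<subseteq> V \<and> (\<forall>v\<in>V. v \<in> D \<or> (\<exists>u\<in>D. E v u))"

definition minimal_dominating :: "'a set \<Rightarrow> ('a \<Rightarrow> 'a \<Rightarrow> bool) \<Rightarrow> 'a set \<Rightarrow> bool" where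
  "minimal_dominating V E D \<longleftrightarrow> dominating V E D \<and> (\<forall>D'. D' \<subset> D \<longrightarrow> \<not> dominating V E D')"

definition independent_set :: "'a set \<Rightarrow> ('a \<Rightarrow> 'a \<Rightarrow> bool) \<Rightarrow> 'a set \<Rightarrow> bool" where
  "independent_set V E S \<longleftrightarrow> S \<subseteq> V \<and> (\<forall>x\<in>S. \<forall>y\<in>S. \<not> E x y)"

definition direct_prod_edge :: "('a \<Rightarrow> 'a \<Rightarrow> bool) \<Rightarrow> ('b \<Rightarrow> 'b \<Rightarrow> bool) \<Rightarrow> ('a \<times> 'b) \<Rightarrow> ('a \<times> 'b) \<Rightarrow> bool" where
  "direct_prod_edge EG EH p q \<longleftrightarrow> EG (fst p) (fst q) \<and> EH (snd p) (snd q)"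

end

theory Submission
  imports Defs
begin

text \<open>
  If \<open>D\<close> is independent, so is \<open>D \<times> V(H)\<close>, and an independent dominating set is minimal:
  a removed vertex has no neighbour left in the set. Conversely, if \<open>d\<^sub>1, d\<^sub>2 \<in> D\<close> are
  adjacent, choose \<open>h \<in> V(H)\<close> that is not the only neighbour of any vertex (possible in a
  connected graph with at least three vertices). Then \<open>(d\<^sub>1, h)\<close> can be dropped from
  \<open>D \<times> V(H)\<close>: it is dominated by \<open>(d\<^sub>2, h')\<close> for any neighbour \<open>h'\<close> of \<open>h\<close>, and every vertex
  \<open>(g, k)\<close> with \<open>g \<notin> D\<close> is dominated by some \<open>(u, k')\<close> with \<open>k' \<noteq> h\<close>.
\<close>

lemma independent_dominating_imp_minimal_dominating:
  assumes "independent_set V E S" and "dominating V E S"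
  shows "minimal_dominating V E S"
  unfolding minimal_dominating_def
proof (intro conjI allI impI notI)
  show "dominating V E S" by (fact assms(2))
next
  fix S' assume "S' \<subset> S" and dom': "dominating V E S'"
  then obtain v where v: "v \<in> S" "v \<notin> S'" by blast
  then have "v \<in> V" using assms(1) by (auto simp: independent_set_def)
  then obtain u where "u \<in> S'" "E v u" using dom' v(2) by (auto simp: dominating_def)
  then show False using \<open>S' \<subset> S\<close> v(1) assms(1) by (auto simp: independent_set_def)
qed

lemma independent_set_direct_prod:
  assumes "independent_set VG EG D"
  shows "independent_set (VG \<times> VH) (direct_prod_edge EG EH) (D \<times> VH)"
  using assms by (auto simp: independent_set_def direct_prod_edge_def)

lemma dominating_direct_prod:
  assumes "dominating VG EG D" and "\<forall>k\<in>VH. \<exists>k'\<in>VH. EH k k'"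
  shows "dominating (VG \<times> VH) (direct_prod_edge EG EH) (D \<times> VH)"
  using assms by (fastforce simp: dominating_def direct_prod_edge_def)

lemma dominating_direct_prod_Diff_singleton:
  assumes "dominating VG EG D" and "d\<^sub>1 \<in> D" "d\<^sub>2 \<in> D" "EG d\<^sub>1 d\<^sub>2"
    and "\<forall>k\<in>VH. \<exists>k'\<in>VH. EH k k' \<and> k' \<noteq> h"
  shows "dominating (VG \<times> VH) (direct_prod_edge EG EH) (D \<times> VH - {(d\<^sub>1, h)})"
  unfolding dominating_def
proof (intro conjI ballI)
  show "D \<times> VH - {(d\<^sub>1, h)} \<subseteq> VG \<times> VH"
    using assms(1) by (auto simp: dominating_def)
next
  fix p assume "p \<in> VG \<times> VH"
  then obtain g k where p: "p = (g, k)" "g \<in> VG" "k \<in> VH" by blast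
  consider "p = (d\<^sub>1, h)" | "g \<in> D" "p \<noteq> (d\<^sub>1, h)" | "g \<notin> D" by blast
  then show "p \<in> D \<times> VH - {(d\<^sub>1, h)} \<or> (\<exists>u\<in>D \<times> VH - {(d\<^sub>1, h)}. direct_prod_edge EG EH p u)"
  proof cases
    case 1
    then obtain h' where "h' \<in> VH" "EH h h'" "h' \<noteq> h" using assms(5) p by auto
    then show ?thesis using 1 assms(3,4)
      by (intro disjI2 bexI[of _ "(d\<^sub>2, h')"]) (auto simp: direct_prod_edge_def)
  next
    case 2
    then show ?thesis using p by blast
  next
    case 3
    then obtain u where "u \<in> D" "EG g u" using assms(1) p(2) by (auto simp: dominating_def)
    moreover obtain k' where "k' \<in> VH" "EH k k'" "k' \<noteq> h" using assms(5) p(3) by blast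
    ultimately show ?thesis using p(1)
      by (intro disjI2 bexI[of _ "(u, k')"]) (auto simp: direct_prod_edge_def)
  qed
qed

lemma independent_set_if_minimal_dominating_direct_prod:
  assumes "dominating VG EG D" and "h \<in> VH" and "\<forall>k\<in>VH. \<exists>k'\<in>VH. EH k k' \<and> k' \<noteq> h"
    and "minimal_dominating (VG \<times> VH) (direct_prod_edge EG EH) (D \<times> VH)"
  shows "independent_set VG EG D"
  unfolding independent_set_def
proof (intro conjI ballI notI)
  show "D \<subseteq> VG" using assms(1) by (simp add: dominating_def)
next
  fix d\<^sub>1 d\<^sub>2 assume "d\<^sub>1 \<in> D" "d\<^sub>2 \<in> D" "EG d\<^sub>1 d\<^sub>2"
  then have "dominating (VG \<times> VH) (direct_prod_edge EG EH) (D \<times> VH - {(d\<^sub>1, h)})"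
    by (rule dominating_direct_prod_Diff_singleton[OF assms(1) _ _ _ assms(3)])
  moreover have "D \<times> VH - {(d\<^sub>1, h)} \<subset> D \<times> VH" using \<open>d\<^sub>1 \<in> D\<close> assms(2) by blast
  ultimately show False using assms(4) unfolding minimal_dominating_def by blast
qed

lemma card_less_obtain_not_mem:
  assumes "finite A" and "card V > card A"
  obtains z where "z \<in> V" "z \<notin> A"
  using assms card_mono[of A V] card.infinite[of V] by fastforce

lemma connected_graph_has_neighbour:
  assumes "connected_graph V E" and "card V \<ge> 2" and "x \<in> V"
  shows "\<exists>y. E x y"
proof -
  obtain y where "y \<in> V" "y \<noteq> x"
    using card_less_obtain_not_mem[of "{x}" V] assms(2) by force
  moreover from this have "E\<^sup>*\<^sup>* x y"
    using assms(1,3) by (auto simp: connected_graph_def)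
  ultimately show ?thesis by (auto elim: converse_rtranclpE)
qed

lemma reachable_from_isolated_edge:
  assumes "E\<^sup>*\<^sup>* a z" and "\<forall>y. E a y \<longrightarrow> y = b" and "\<forall>y. E b y \<longrightarrow> y = a"
  shows "z \<in> {a, b}"
  using assms(1) by (induction rule: rtranclp_induct) (use assms(2,3) in auto)

text \<open>
  A vertex \<open>h\<^sub>0\<close> works unless it is the only neighbour of some \<open>k\<close>; then \<open>k\<close> works, since
  otherwise \<open>{h\<^sub>0, k}\<close> would be a whole component.
\<close>

lemma exists_vertex_not_sole_neighbour:
  assumes "simple_graph V E" and "connected_graph V E" and "card V \<ge> 3"
  shows "\<exists>h\<in>V. \<forall>x\<in>V. \<exists>y\<in>V. E x y \<and> y \<noteq> h"
proof -
  have edge_in_V: "\<And>x y. E x y \<Longrightarrow> x \<in> V \<and> y \<in> V" and sym: "\<And>x y. E x y \<Longrightarrow> E y x"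
    using assms(1) by (auto simp: simple_graph_def)
  have neighbour: "\<exists>y\<in>V. E x y" if "x \<in> V" for x
    using connected_graph_has_neighbour[OF assms(2) _ that] assms(3) edge_in_V by fastforce
  obtain h\<^sub>0 where "h\<^sub>0 \<in> V" using card_less_obtain_not_mem[of "{}" V] assms(3) by auto
  show ?thesis
  proof (cases "\<exists>k. E k h\<^sub>0 \<and> (\<forall>y. E k y \<longrightarrow> y = h\<^sub>0)")
    case False
    then have "\<forall>x\<in>V. \<exists>y\<in>V. E x y \<and> y \<noteq> h\<^sub>0"
      using neighbour edge_in_V by blast
    then show ?thesis using \<open>h\<^sub>0 \<in> V\<close> by blast
  next
    case True
    then obtain k where k: "E k h\<^sub>0" "\<forall>y. E k y \<longrightarrow> y = h\<^sub>0" by blast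
    have "\<exists>y\<in>V. E x y \<and> y \<noteq> k" if "x \<in> V" for x
    proof (cases "x = h\<^sub>0")
      case True
      have "card {h\<^sub>0, k} \<le> 2" by (simp add: card_insert_if)
      then have "card {h\<^sub>0, k} < card V" using assms(3) by simp
      then obtain z where z: "z \<in> V" "z \<notin> {h\<^sub>0, k}"
        using card_less_obtain_not_mem[of "{h\<^sub>0, k}" V] by blast
      have "E\<^sup>*\<^sup>* h\<^sub>0 z" using assms(2) \<open>h\<^sub>0 \<in> V\<close> z(1) by (auto simp: connected_graph_def)
      with k(2) z(2) have "\<not> (\<forall>y. E h\<^sub>0 y \<longrightarrow> y = k)"
        using reachable_from_isolated_edge by metis
      then show ?thesis using True edge_in_V by blast
    next
      case False
      then show ?thesis using neighbour[OF that] k(2) sym by blast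
    qed
    then show ?thesis using k(1) edge_in_V by blast
  qed
qed

theorem lemma11:
  fixes VG :: "'a set" and EG :: "'a \<Rightarrow> 'a \<Rightarrow> bool"
    and VH :: "'b set" and EH :: "'b \<Rightarrow> 'b \<Rightarrow> bool"
    and D :: "'a set"
  assumes "simple_graph VG EG" and "connected_graph VG EG" and "card VG \<ge> 3"
    and "simple_graph VH EH" and "connected_graph VH EH" and "card VH \<ge> 3"
    and "minimal_dominating VG EG D"
  shows "minimal_dominating (VG \<times> VH) (direct_prod_edge EG EH) (D \<times> VH)
           \<longleftrightarrow> independent_set VG EG D"
proof
  have dom: "dominating VG EG D" using assms(7) by (simp add: minimal_dominating_def)
  obtain h where "h \<in> VH" and h: "\<forall>k\<in>VH. \<exists>k'\<in>VH. EH k k' \<and> k' \<noteq> h"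
    using exists_vertex_not_sole_neighbour[OF assms(4-6)] by blast
  then have no_isolated: "\<forall>k\<in>VH. \<exists>k'\<in>VH. EH k k'" by blast
  show "independent_set VG EG D"
    if "minimal_dominating (VG \<times> VH) (direct_prod_edge EG EH) (D \<times> VH)"
    using independent_set_if_minimal_dominating_direct_prod[OF dom \<open>h \<in> VH\<close> h that] .
  show "minimal_dominating (VG \<times> VH) (direct_prod_edge EG EH) (D \<times> VH)"
    if "independent_set VG EG D"
    using independent_dominating_imp_minimal_dominating[OF independent_set_direct_prod[OF that]
        dominating_direct_prod[OF dom no_isolated]] .
qed

end
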